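(* Let $S$ be a quasi-adequate semigroup with an admissible adequate transversal $S^0$. Then for all $x,y\in S$, $\overline{xy}=\overline{\overline{x}f_xe_y\overline{y}}$.
   Context: For a semigroup $S$, $S^1$ is $S$ with an identity adjoined, $\mathcal{L},\mathcal{R}$ Green's relations. $\mathcal{R}^\ast=\{(a,b):\forall x,y\in S^1,\ xa=ya\iff xb=yb\}$, $\mathcal{L}^\ast=\{(a,b):\forall x,y\in S^1,\ ax=ay\iff bx=by\}$. $S$ is abundant if each $\mathcal{R}^\ast$- and $\mathcal{L}^\ast$-class contains an idempotent; adequate if also idempotents commute (then $a^+$, $a^\ast$ are the unique idempotents $\mathcal{R}^\ast$-, resp. $\mathcal{L}^\ast$-related to $a$). Quasi-adequate: abundant with idempotents forming a subsemigroup. An abundant subsemigroup $U$ of abundant $S$ is a $\ast$-subsemigroup if $\mathcal{L}^\ast(U)=\mathcal{L}^\ast(S)\cap(U\times U)$, $\mathcal{R}^\ast(U)=\mathcal{R}^\ast(S)\cap(U\times U)$. An adequate $\ast$-subsemigroup $S^0$ of abundant $S$ is an adequate transversal if each $x\in S$ has a unique $\overline{x}\in S^0$ and idempotents $e,f$ of $S$ (then unique, written $e_x,f_x$) with $x=e\overline{x}f$, $e\,\mathcal{L}\,\overline{x}^+$, $f\,\mathcal{R}\,\overline{x}^\ast$. It is admissible if $\overline{xy}=\overline{x}\,\overline{y}$ for all $x,y\in S$. *)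

theory Defs
  imports Main
begin

text \<open>The semigroup S is the whole type 'a (class semigroup_mult). Subsemigroups are
  carrier sets U. Elements of U^1 are represented as 'a option, None being the
  adjoined identity.\<close>

definition ones :: "'a set \<Rightarrow> 'a option set" where
  "ones U = insert None (Some ` U)"

fun lmul1 :: "'a::semigroup_mult option \<Rightarrow> 'a \<Rightarrow> 'a" where
  "lmul1 None a = a"
| "lmul1 (Some x) a = x * a"

fun rmul1 :: "'a::semigroup_mult \<Rightarrow> 'a option \<Rightarrow> 'a" where
  "rmul1 a None = a"
| "rmul1 a (Some x) = a * x"

definition idem :: "'a::semigroup_mult \<Rightarrow> bool" where
  "idem e \<longleftrightarrow> e * e = e"

definition subsemigroup :: "'a::semigroup_mult set \<Rightarrow> bool" where
  "subsemigroup U \<longleftrightarrow> (\<forall>a\<in>U. \<forall>b\<in>U. a * b \<in> U)"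

definition greenL :: "'a::semigroup_mult set \<Rightarrow> 'a \<Rightarrow> 'a \<Rightarrow> bool" where
  "greenL U a b \<longleftrightarrow> a \<in> U \<and> b \<in> U \<and>
     (\<exists>x\<in>ones U. lmul1 x a = b) \<and> (\<exists>y\<in>ones U. lmul1 y b = a)"

definition greenR :: "'a::semigroup_mult set \<Rightarrow> 'a \<Rightarrow> 'a \<Rightarrow> bool" where
  "greenR U a b \<longleftrightarrow> a \<in> U \<and> b \<in> U \<and>
     (\<exists>x\<in>ones U. rmul1 a x = b) \<and> (\<exists>y\<in>ones U. rmul1 b y = a)"

definition rstar :: "'a::semigroup_mult set \<Rightarrow> 'a \<Rightarrow> 'a \<Rightarrow> bool" where
  "rstar U a b \<longleftrightarrow> a \<in> U \<and> b \<in> U \<and>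
     (\<forall>x\<in>ones U. \<forall>y\<in>ones U. lmul1 x a = lmul1 y a \<longleftrightarrow> lmul1 x b = lmul1 y b)"

definition lstar :: "'a::semigroup_mult set \<Rightarrow> 'a \<Rightarrow> 'a \<Rightarrow> bool" where
  "lstar U a b \<longleftrightarrow> a \<in> U \<and> b \<in> U \<and>
     (\<forall>x\<in>ones U. \<forall>y\<in>ones U. rmul1 a x = rmul1 a y \<longleftrightarrow> rmul1 b x = rmul1 b y)"

definition abundant :: "'a::semigroup_mult set \<Rightarrow> bool" where
  "abundant U \<longleftrightarrow> subsemigroup U \<and>
     (\<forall>a\<in>U. \<exists>e\<in>U. idem e \<and> rstar U a e) \<and>
     (\<forall>a\<in>U. \<exists>e\<in>U. idem e \<and> lstar U a e)"

definition adequate :: "'a::semigroup_mult set \<Rightarrow> bool" where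
  "adequate U \<longleftrightarrow> abundant U \<and>
     (\<forall>e\<in>U. \<forall>f\<in>U. idem e \<and> idem f \<longrightarrow> e * f = f * e)"

definition quasi_adequate :: "'a::semigroup_mult set \<Rightarrow> bool" where
  "quasi_adequate U \<longleftrightarrow> abundant U \<and>
     (\<forall>e\<in>U. \<forall>f\<in>U. idem e \<and> idem f \<longrightarrow> idem (e * f))"

definition aplus :: "'a::semigroup_mult set \<Rightarrow> 'a \<Rightarrow> 'a" where
  "aplus U a = (THE e. e \<in> U \<and> idem e \<and> rstar U a e)"

definition astar :: "'a::semigroup_mult set \<Rightarrow> 'a \<Rightarrow> 'a" where
  "astar U a = (THE e. e \<in> U \<and> idem e \<and> lstar U a e)"

definition star_subsemigroup :: "'a::semigroup_mult set \<Rightarrow> 'a set \<Rightarrow> bool" where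
  "star_subsemigroup S U \<longleftrightarrow> U \<subseteq> S \<and> abundant U \<and>
     (\<forall>a\<in>U. \<forall>b\<in>U. lstar U a b \<longleftrightarrow> lstar S a b) \<and>
     (\<forall>a\<in>U. \<forall>b\<in>U. rstar U a b \<longleftrightarrow> rstar S a b)"

definition decomp :: "'a::semigroup_mult set \<Rightarrow> 'a \<Rightarrow> 'a \<Rightarrow> 'a \<Rightarrow> 'a \<Rightarrow> bool" where
  "decomp S0 x t e f \<longleftrightarrow> t \<in> S0 \<and> idem e \<and> idem f \<and> x = e * t * f \<and>
     greenL UNIV e (aplus S0 t) \<and> greenR UNIV f (astar S0 t)"

definition adequate_transversal :: "'a::semigroup_mult set \<Rightarrow> bool" where
  "adequate_transversal S0 \<longleftrightarrow> abundant (UNIV :: 'a set) \<and> adequate S0 \<and>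
     star_subsemigroup UNIV S0 \<and>
     (\<forall>x. \<exists>!t. \<exists>e f. decomp S0 x t e f)"

definition bar :: "'a::semigroup_mult set \<Rightarrow> 'a \<Rightarrow> 'a" where
  "bar S0 x = (THE t. \<exists>e f. decomp S0 x t e f)"

definition e_of :: "'a::semigroup_mult set \<Rightarrow> 'a \<Rightarrow> 'a" where
  "e_of S0 x = (THE e. \<exists>f. decomp S0 x (bar S0 x) e f)"

definition f_of :: "'a::semigroup_mult set \<Rightarrow> 'a \<Rightarrow> 'a" where
  "f_of S0 x = (THE f. \<exists>e. decomp S0 x (bar S0 x) e f)"

definition admissible :: "'a::semigroup_mult set \<Rightarrow> bool" where
  "admissible S0 \<longleftrightarrow> (\<forall>x y. bar S0 (x * y) = bar S0 x * bar S0 y)"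

end

theory Submission
  imports Defs
begin

text \<open>Admissibility makes \<open>bar\<close> a homomorphism fixing \<open>S\<^sup>0\<close>, so the right-hand side equals
  \<open>x\<^sup>- \<cdot> bar f\<^sub>x \<cdot> bar e\<^sub>y \<cdot> y\<^sup>-\<close>. Since \<open>f\<^sub>x \<R> (x\<^sup>-)\<^sup>*\<close>, the image \<open>bar f\<^sub>x\<close> is an idempotent of
  \<open>S\<^sup>0\<close> that absorbs \<open>(x\<^sup>-)\<^sup>*\<close> in the pattern of an \<open>\<L>\<close>-class; idempotents of the adequate
  \<open>S\<^sup>0\<close> commute, so \<open>bar f\<^sub>x = (x\<^sup>-)\<^sup>*\<close>, and dually \<open>bar e\<^sub>y = (y\<^sup>-)\<^sup>+\<close>. Hence the right-hand
  side is \<open>x\<^sup>- (x\<^sup>-)\<^sup>* (y\<^sup>-)\<^sup>+ y\<^sup>- = x\<^sup>- y\<^sup>- = bar (x y)\<close>. To know that \<open>e_of\<close> and \<open>f_of\<close> really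
  give a decomposition one needs that \<open>e\<^sub>x\<close>, \<open>f\<^sub>x\<close> are unique: both are \<open>\<R>\<^sup>*\<close>- resp.
  \<open>\<L>\<^sup>*\<close>-related to \<open>x\<close> in \<open>S\<close>, and two idempotents in one \<open>\<R>\<^sup>*\<close>-class and one \<open>\<L>\<close>-class
  coincide.\<close>

lemma lmul1_mult_assoc: "lmul1 u a * b = lmul1 u (a * b)"
  by (cases u) (simp_all add: mult.assoc)

lemma rmul1_mult_assoc: "a * rmul1 b u = rmul1 (a * b) u"
  by (cases u) (simp_all add: mult.assoc)

lemma ones_UNIV: "ones UNIV = UNIV"
  by (auto simp: ones_def) (metis not_None_eq rangeI)

lemma rstar_UNIV_iff:
  "rstar UNIV a b \<longleftrightarrow> (\<forall>x y. lmul1 x a = lmul1 y a \<longleftrightarrow> lmul1 x b = lmul1 y b)"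
  by (simp add: rstar_def ones_UNIV)

lemma lstar_UNIV_iff:
  "lstar UNIV a b \<longleftrightarrow> (\<forall>x y. rmul1 a x = rmul1 a y \<longleftrightarrow> rmul1 b x = rmul1 b y)"
  by (simp add: lstar_def ones_UNIV)

lemma rstar_sym: "rstar U a b \<Longrightarrow> rstar U b a"
  unfolding rstar_def by blast

lemma rstar_trans: "rstar U a b \<Longrightarrow> rstar U b c \<Longrightarrow> rstar U a c"
  unfolding rstar_def by blast

lemma lstar_sym: "lstar U a b \<Longrightarrow> lstar U b a"
  unfolding lstar_def by blast

lemma lstar_trans: "lstar U a b \<Longrightarrow> lstar U b c \<Longrightarrow> lstar U a c"
  unfolding lstar_def by blast

lemma rstar_left_identity: "rstar U a b \<Longrightarrow> x \<in> U \<Longrightarrow> x * a = a \<longleftrightarrow> x * b = b"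
  unfolding rstar_def ones_def by (metis image_eqI insertCI lmul1.simps)

lemma lstar_right_identity: "lstar U a b \<Longrightarrow> x \<in> U \<Longrightarrow> a * x = a \<longleftrightarrow> b * x = b"
  unfolding lstar_def ones_def by (metis image_eqI insertCI rmul1.simps)

lemma rstar_idem_absorb: "rstar U e e' \<Longrightarrow> e \<in> U \<Longrightarrow> idem e \<Longrightarrow> e * e' = e'"
  using rstar_left_identity[of U e e' e] by (simp add: idem_def)

lemma lstar_idem_absorb: "lstar U e e' \<Longrightarrow> e \<in> U \<Longrightarrow> idem e \<Longrightarrow> e' * e = e'"
  using lstar_right_identity[of U e e' e] by (simp add: idem_def)

lemma rstar_UNIV_mult_left: "rstar UNIV a b \<Longrightarrow> rstar UNIV (c * a) (c * b)"
  unfolding rstar_UNIV_iff by (metis lmul1.simps(2) lmul1_mult_assoc)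

lemma lstar_UNIV_mult_right: "lstar UNIV a b \<Longrightarrow> lstar UNIV (a * c) (b * c)"
  unfolding lstar_UNIV_iff by (metis rmul1.simps(2) rmul1_mult_assoc)

lemma rstar_UNIV_if_right_mult:
  assumes "a = b * u" and "b = a * v"
  shows "rstar UNIV a b"
  unfolding rstar_UNIV_iff
proof (intro allI iffI)
  fix x y
  show "lmul1 x b = lmul1 y b" if "lmul1 x a = lmul1 y a"
    using arg_cong[OF that, of "\<lambda>z. z * v"] assms(2) by (simp add: lmul1_mult_assoc)
  show "lmul1 x a = lmul1 y a" if "lmul1 x b = lmul1 y b"
    using arg_cong[OF that, of "\<lambda>z. z * u"] assms(1) by (simp add: lmul1_mult_assoc)
qed

lemma lstar_UNIV_if_left_mult:
  assumes "a = u * b" and "b = v * a"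
  shows "lstar UNIV a b"
  unfolding lstar_UNIV_iff
proof (intro allI iffI)
  fix x y
  show "rmul1 b x = rmul1 b y" if "rmul1 a x = rmul1 a y"
    using arg_cong[OF that, of "\<lambda>z. v * z"] assms(2) by (simp add: rmul1_mult_assoc)
  show "rmul1 a x = rmul1 a y" if "rmul1 b x = rmul1 b y"
    using arg_cong[OF that, of "\<lambda>z. u * z"] assms(1) by (simp add: rmul1_mult_assoc)
qed

lemma greenL_idem_absorb:
  assumes "greenL U e p" and "idem e" and "idem p"
  shows "e * p = e" and "p * e = p"
proof -
  obtain u v where u: "lmul1 u e = p" and v: "lmul1 v p = e"
    using assms(1) unfolding greenL_def by blast
  show "e * p = e" using v assms(3) lmul1_mult_assoc[of v p p] by (simp add: idem_def)
  show "p * e = p" using u assms(2) lmul1_mult_assoc[of u e e] by (simp add: idem_def)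
qed

lemma greenR_idem_absorb:
  assumes "greenR U f q" and "idem f" and "idem q"
  shows "q * f = f" and "f * q = q"
proof -
  obtain u v where u: "rmul1 f u = q" and v: "rmul1 q v = f"
    using assms(1) unfolding greenR_def by blast
  show "q * f = f" using v assms(3) rmul1_mult_assoc[of q q v] by (simp add: idem_def)
  show "f * q = q" using u assms(2) rmul1_mult_assoc[of f f u] by (simp add: idem_def)
qed

lemma adequate_idem_commute:
  "adequate U \<Longrightarrow> e \<in> U \<Longrightarrow> f \<in> U \<Longrightarrow> idem e \<Longrightarrow> idem f \<Longrightarrow> e * f = f * e"
  unfolding adequate_def by blast

lemma adequate_rstar_idem_eq:
  assumes "adequate U" "e \<in> U" "e' \<in> U" "idem e" "idem e'" "rstar U e e'"
  shows "e = e'"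
proof -
  have "e' * e = e" using rstar_idem_absorb[OF rstar_sym[OF assms(6)]] assms by blast
  moreover have "e * e' = e'" using rstar_idem_absorb[OF assms(6)] assms by blast
  ultimately show ?thesis using adequate_idem_commute[OF assms(1-5)] by simp
qed

lemma adequate_lstar_idem_eq:
  assumes "adequate U" "e \<in> U" "e' \<in> U" "idem e" "idem e'" "lstar U e e'"
  shows "e = e'"
proof -
  have "e * e' = e" using lstar_idem_absorb[OF lstar_sym[OF assms(6)]] assms by blast
  moreover have "e' * e = e'" using lstar_idem_absorb[OF assms(6)] assms by blast
  ultimately show ?thesis using adequate_idem_commute[OF assms(1-5)] by simp
qed

lemma aplus_props:
  assumes "adequate U" and "a \<in> U"
  shows "aplus U a \<in> U" "idem (aplus U a)" "rstar U a (aplus U a)"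
proof -
  obtain e where e: "e \<in> U" "idem e" "rstar U a e"
    using assms unfolding adequate_def abundant_def by blast
  have "aplus U a = e"
    unfolding aplus_def
  proof (rule the_equality)
    show "e' = e" if "e' \<in> U \<and> idem e' \<and> rstar U a e'" for e'
      using that e assms(1) by (metis adequate_rstar_idem_eq rstar_sym rstar_trans)
  qed (use e in blast)
  with e show "aplus U a \<in> U" "idem (aplus U a)" "rstar U a (aplus U a)" by simp_all
qed

lemma astar_props:
  assumes "adequate U" and "a \<in> U"
  shows "astar U a \<in> U" "idem (astar U a)" "lstar U a (astar U a)"
proof -
  obtain e where e: "e \<in> U" "idem e" "lstar U a e"
    using assms unfolding adequate_def abundant_def by blast
  have "astar U a = e"
    unfolding astar_def
  proof (rule the_equality)
    show "e' = e" if "e' \<in> U \<and> idem e' \<and> lstar U a e'" for e'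
      using that e assms(1) by (metis adequate_lstar_idem_eq lstar_sym lstar_trans)
  qed (use e in blast)
  with e show "astar U a \<in> U" "idem (astar U a)" "lstar U a (astar U a)" by simp_all
qed

lemma aplus_mult_self: "adequate U \<Longrightarrow> a \<in> U \<Longrightarrow> aplus U a * a = a"
  using aplus_props rstar_left_identity[OF rstar_sym] by (metis idem_def)

lemma astar_mult_self: "adequate U \<Longrightarrow> a \<in> U \<Longrightarrow> a * astar U a = a"
  using astar_props lstar_right_identity[OF lstar_sym] by (metis idem_def)

lemma decomp_self:
  assumes "adequate S0" and "t \<in> S0"
  shows "decomp S0 t t (aplus S0 t) (astar S0 t)"
proof -
  have "greenL UNIV (aplus S0 t) (aplus S0 t)" "greenR UNIV (astar S0 t) (astar S0 t)"
    unfolding greenL_def greenR_def ones_def by (metis UNIV_I insertI1 lmul1.simps(1) rmul1.simps(1))+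
  then show ?thesis
    using assms aplus_props[OF assms] astar_props[OF assms]
      aplus_mult_self[OF assms] astar_mult_self[OF assms]
    unfolding decomp_def by (simp add: mult.assoc)
qed

lemma decomp_absorb:
  assumes "adequate S0" and "decomp S0 x t e f"
  shows "e * aplus S0 t = e" "aplus S0 t * e = aplus S0 t"
    and "astar S0 t * f = f" "f * astar S0 t = astar S0 t"
proof -
  have "t \<in> S0" "idem e" "idem f" "greenL UNIV e (aplus S0 t)" "greenR UNIV f (astar S0 t)"
    using assms(2) unfolding decomp_def by auto
  with aplus_props(2) astar_props(2) assms(1)
  show "e * aplus S0 t = e" "aplus S0 t * e = aplus S0 t"
    and "astar S0 t * f = f" "f * astar S0 t = astar S0 t"
    by (metis greenL_idem_absorb greenR_idem_absorb)+
qed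

locale transversal =
  fixes S0 :: "'a::semigroup_mult set"
  assumes adequate_transversal: "adequate_transversal S0"
begin

lemma adequate_S0: "adequate S0"
  using adequate_transversal unfolding adequate_transversal_def by blast

lemma star_subsemigroup_S0: "star_subsemigroup UNIV S0"
  using adequate_transversal unfolding adequate_transversal_def by blast

lemma aplus_rstar_UNIV: "t \<in> S0 \<Longrightarrow> rstar UNIV t (aplus S0 t)"
  using star_subsemigroup_S0 aplus_props[OF adequate_S0] unfolding star_subsemigroup_def by blast

lemma astar_lstar_UNIV: "t \<in> S0 \<Longrightarrow> lstar UNIV t (astar S0 t)"
  using star_subsemigroup_S0 astar_props[OF adequate_S0] unfolding star_subsemigroup_def by blast

lemma decomp_rstar:
  assumes d: "decomp S0 x t e f"
  shows "rstar UNIV x e"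
proof -
  have t: "t \<in> S0" and x: "x = e * t * f" using d unfolding decomp_def by auto
  have "e * t = x * astar S0 t"
    using x decomp_absorb(4)[OF adequate_S0 d] astar_mult_self[OF adequate_S0 t]
    by (metis mult.assoc)
  with x have "rstar UNIV x (e * t)" by (intro rstar_UNIV_if_right_mult) (simp_all add: mult.assoc)
  moreover have "rstar UNIV (e * t) e"
    using rstar_UNIV_mult_left[OF aplus_rstar_UNIV[OF t], of e] decomp_absorb(1)[OF adequate_S0 d]
    by simp
  ultimately show ?thesis by (rule rstar_trans)
qed

lemma decomp_lstar:
  assumes d: "decomp S0 x t e f"
  shows "lstar UNIV x f"
proof -
  have t: "t \<in> S0" and x: "x = e * t * f" using d unfolding decomp_def by auto
  have "t * f = aplus S0 t * x"
    using x decomp_absorb(2)[OF adequate_S0 d] aplus_mult_self[OF adequate_S0 t]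
    by (metis mult.assoc)
  with x have "lstar UNIV x (t * f)" by (intro lstar_UNIV_if_left_mult) (simp_all add: mult.assoc)
  moreover have "lstar UNIV (t * f) f"
    using lstar_UNIV_mult_right[OF astar_lstar_UNIV[OF t], of f] decomp_absorb(3)[OF adequate_S0 d]
    by simp
  ultimately show ?thesis by (rule lstar_trans)
qed

lemma decomp_unique:
  assumes d: "decomp S0 x t e f" and d': "decomp S0 x t e' f'"
  shows "e = e'" and "f = f'"
proof -
  have idem: "idem e" "idem f" using d unfolding decomp_def by auto
  note abs = decomp_absorb[OF adequate_S0 d] and abs' = decomp_absorb[OF adequate_S0 d']
  have "e * e' = e'"
    using rstar_trans[OF rstar_sym[OF decomp_rstar[OF d]] decomp_rstar[OF d']] idem(1)
    by (blast intro: rstar_idem_absorb)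
  moreover have "e * e' = e"
    using abs(1) abs'(2) by (metis mult.assoc)
  ultimately show "e = e'" by simp
  have "f' * f = f'"
    using lstar_trans[OF lstar_sym[OF decomp_lstar[OF d]] decomp_lstar[OF d']] idem(2)
    by (blast intro: lstar_idem_absorb)
  moreover have "f' * f = f"
    using abs(3) abs'(4) by (metis mult.assoc)
  ultimately show "f = f'" by simp
qed

lemma bar_eqI: "decomp S0 x t e f \<Longrightarrow> bar S0 x = t"
  using adequate_transversal unfolding adequate_transversal_def bar_def by (blast intro: the1_equality)

lemma decomp_bar_e_of_f_of: "decomp S0 x (bar S0 x) (e_of S0 x) (f_of S0 x)"
proof -
  have "\<exists>!t. \<exists>e f. decomp S0 x t e f"
    using adequate_transversal unfolding adequate_transversal_def by blast
  then have "\<exists>e f. decomp S0 x (bar S0 x) e f"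
    unfolding bar_def by (rule theI')
  then obtain e f where d: "decomp S0 x (bar S0 x) e f" by blast
  have "e_of S0 x = e" unfolding e_of_def
    by (rule the_equality) (use d decomp_unique(1)[OF d] in blast)+
  moreover have "f_of S0 x = f" unfolding f_of_def
    by (rule the_equality) (use d decomp_unique(2)[OF d] in blast)+
  ultimately show ?thesis using d by simp
qed

lemma bar_in_S0: "bar S0 x \<in> S0"
  using decomp_bar_e_of_f_of unfolding decomp_def by blast

lemma bar_S0: "t \<in> S0 \<Longrightarrow> bar S0 t = t"
  using bar_eqI decomp_self[OF adequate_S0] by blast

end

locale admissible_transversal = transversal +
  assumes admissible: "admissible S0"
begin

lemma bar_mult: "bar S0 (a * b) = bar S0 a * bar S0 b"
  using admissible unfolding admissible_def by blast

lemma bar_idem: "idem e \<Longrightarrow> idem (bar S0 e)"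
  unfolding idem_def by (metis bar_mult)

lemma bar_e_of: "bar S0 (e_of S0 x) = aplus S0 (bar S0 x)"
proof -
  let ?e = "e_of S0 x" and ?p = "aplus S0 (bar S0 x)"
  note d = decomp_bar_e_of_f_of[of x]
  have p: "?p \<in> S0" "idem ?p" "bar S0 ?p = ?p"
    using aplus_props[OF adequate_S0 bar_in_S0] bar_S0 by auto
  have e: "idem (bar S0 ?e)" using d bar_idem unfolding decomp_def by blast
  have "bar S0 ?e * ?p = bar S0 ?e" "?p * bar S0 ?e = ?p"
    using bar_mult[of ?e ?p] bar_mult[of ?p ?e] decomp_absorb(1,2)[OF adequate_S0 d] p(3) by simp_all
  then show ?thesis
    using adequate_idem_commute[OF adequate_S0 bar_in_S0 p(1) e p(2)] by simp
qed

lemma bar_f_of: "bar S0 (f_of S0 x) = astar S0 (bar S0 x)"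
proof -
  let ?f = "f_of S0 x" and ?q = "astar S0 (bar S0 x)"
  note d = decomp_bar_e_of_f_of[of x]
  have q: "?q \<in> S0" "idem ?q" "bar S0 ?q = ?q"
    using astar_props[OF adequate_S0 bar_in_S0] bar_S0 by auto
  have f: "idem (bar S0 ?f)" using d bar_idem unfolding decomp_def by blast
  have "?q * bar S0 ?f = bar S0 ?f" "bar S0 ?f * ?q = ?q"
    using bar_mult[of ?q ?f] bar_mult[of ?f ?q] decomp_absorb(3,4)[OF adequate_S0 d] q(3) by simp_all
  then show ?thesis
    using adequate_idem_commute[OF adequate_S0 bar_in_S0 q(1) f q(2)] by simp
qed

end

theorem lemma2p12:
  fixes S0 :: "'a::semigroup_mult set"
  assumes "quasi_adequate (UNIV :: 'a set)"
    and "adequate_transversal S0"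
    and "admissible S0"
  shows "\<forall>x y. bar S0 (x * y) = bar S0 (bar S0 x * f_of S0 x * e_of S0 y * bar S0 y)"
proof (intro allI)
  fix x y
  interpret admissible_transversal S0
    using assms(2,3) by unfold_locales
  have "bar S0 (bar S0 x * f_of S0 x * e_of S0 y * bar S0 y)
      = bar S0 x * astar S0 (bar S0 x) * (aplus S0 (bar S0 y) * bar S0 y)"
    by (simp add: bar_mult bar_e_of bar_f_of bar_S0 bar_in_S0 mult.assoc)
  also have "\<dots> = bar S0 x * bar S0 y"
    by (simp add: astar_mult_self aplus_mult_self adequate_S0 bar_in_S0)
  also have "\<dots> = bar S0 (x * y)"
    by (simp add: bar_mult)
  finally show "bar S0 (x * y) = bar S0 (bar S0 x * f_of S0 x * e_of S0 y * bar S0 y)"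
    by simp
qed

end
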